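(* For every $n\in\mathbb{N}_{\geq1}$, the maximally balanced tree $T_n^{mb}$ with $n$ leaves has minimal Colless index, i.e. $\mathcal{C}(T_n^{mb})=c_n$, where $c_n$ is the minimum of $\mathcal{C}(T)$ over all rooted binary trees $T$ with $n$ leaves.
   Context: A rooted binary tree with $n\geq 2$ leaves is a rooted tree whose root has degree 2 and all other internal nodes have degree 3; for $n=1$ it is a single node. For an internal node $v$ with children $v_1,v_2$, let $\kappa(v_i)$ be the number of leaves descending from $v_i$ ($1$ if $v_i$ is a leaf), and let $bal(v)=|\kappa(v_1)-\kappa(v_2)|$. The Colless index is $\mathcal{C}(T)=\sum_v bal(v)$ over all internal nodes $v$. A rooted binary tree is maximally balanced if $bal(v)\leq 1$ for every internal node $v$; for each $n$ there is (up to isomorphism) a unique such tree $T_n^{mb}$. *)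

theory Defs
  imports Main
begin

text \<open>Rooted binary trees (ordered representation; all quantities below are
invariant under swapping children, so this is harmless).\<close>
datatype btree = Leaf | Node btree btree

fun leaves :: "btree \<Rightarrow> nat" where
  "leaves Leaf = 1"
| "leaves (Node l r) = leaves l + leaves r"

definition bal :: "btree \<Rightarrow> btree \<Rightarrow> nat" where
  "bal l r = (if leaves l \<le> leaves r then leaves r - leaves l else leaves l - leaves r)"

fun colless :: "btree \<Rightarrow> nat" where
  "colless Leaf = 0"
| "colless (Node l r) = bal l r + colless l + colless r"

fun max_balanced :: "btree \<Rightarrow> bool" where
  "max_balanced Leaf = True"
| "max_balanced (Node l r) = (bal l r \<le> 1 \<and> max_balanced l \<and> max_balanced r)"

definition min_colless :: "nat \<Rightarrow> nat" where
  "min_colless n = Min (colless ` {T. leaves T = n})"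

end

theory Submission
  imports Defs
begin

text \<open>Let \<open>c n\<close> be the Colless index of the tree that splits \<open>n\<close> leaves as
\<open>\<lfloor>n/2\<rfloor> + \<lceil>n/2\<rceil>\<close> at every node, so \<open>c (2m) = 2 c m\<close> and
\<open>c (2m+1) = c m + c (m+1) + 1\<close>.  Every maximally balanced tree with \<open>n\<close> leaves
has Colless index \<open>c n\<close>, because its two subtrees have \<open>\<lfloor>n/2\<rfloor>\<close> and \<open>\<lceil>n/2\<rceil>\<close>
leaves.  Minimality follows from the inequality \<open>c (a+b) \<le> c a + c b + \<bar>a-b\<bar>\<close>,
which is proved by strong induction, splitting on the parities of \<open>a\<close> and \<open>b\<close>:
halving \<open>a\<close> and \<open>b\<close> and averaging two instances of the induction hypothesis
reproduces the recursion for \<open>c\<close>.\<close>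

fun mb_tree :: "nat \<Rightarrow> btree" where
  "mb_tree n = (if n \<le> 1 then Leaf else Node (mb_tree (n div 2)) (mb_tree (n - n div 2)))"

fun mb_colless :: "nat \<Rightarrow> nat" where
  "mb_colless n = (if n \<le> 1 then 0 else n mod 2 + mb_colless (n div 2) + mb_colless (n - n div 2))"

declare mb_tree.simps [simp del] mb_colless.simps [simp del]

lemma mb_colless_0 [simp]: "mb_colless 0 = 0"
  and mb_colless_1 [simp]: "mb_colless (Suc 0) = 0"
  by (simp_all add: mb_colless.simps)

lemma mb_colless_double: "mb_colless (2 * m) = 2 * mb_colless m"
  by (cases "m = 0") (simp_all add: mb_colless.simps[of "2 * m"])

lemma mb_colless_odd:
  "m \<ge> 1 \<Longrightarrow> mb_colless (2 * m + 1) = mb_colless m + mb_colless (m + 1) + 1"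
  by (subst mb_colless.simps) simp

lemma mb_colless_odd_ge: "mb_colless m + mb_colless (m + 1) \<le> mb_colless (2 * m + 1)"
  using mb_colless_odd[of m] by (cases "m = 0") simp_all

lemma leaves_ge_1: "leaves T \<ge> 1"
  by (induction T) auto

lemma mb_tree_Node:
  "n \<ge> 2 \<Longrightarrow> mb_tree n = Node (mb_tree (n div 2)) (mb_tree (n - n div 2))"
  by (subst mb_tree.simps) simp

lemma leaves_mb_tree: "n \<ge> 1 \<Longrightarrow> leaves (mb_tree n) = n"
proof (induction n rule: less_induct)
  case (less n)
  show ?case
  proof (cases "n \<ge> 2")
    case True
    then show ?thesis by (simp add: mb_tree_Node less.IH)
  next
    case False
    with less.prems show ?thesis by (simp add: mb_tree.simps)
  qed
qed

lemma max_balanced_mb_tree: "max_balanced (mb_tree n)"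
proof (induction n rule: less_induct)
  case (less n)
  show ?case
  proof (cases "n \<ge> 2")
    case True
    then have "bal (mb_tree (n div 2)) (mb_tree (n - n div 2)) \<le> 1"
      unfolding bal_def by (simp add: leaves_mb_tree) presburger
    with True show ?thesis by (simp add: mb_tree_Node less.IH)
  next
    case False
    then show ?thesis by (simp add: mb_tree.simps)
  qed
qed

text \<open>The four parity cases of the induction step of \<open>mb_colless_add_le\<close> below; their premises
are the instances of the induction hypothesis that each case needs.\<close>

lemma mb_colless_add_le_even_even:
  assumes "p \<le> q" and "mb_colless (p + q) \<le> mb_colless p + mb_colless q + (q - p)"
  shows "mb_colless (2 * p + 2 * q) \<le> mb_colless (2 * p) + mb_colless (2 * q) + (2 * q - 2 * p)"
proof -
  have "mb_colless (2 * p + 2 * q) = 2 * mb_colless (p + q)"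
    by (simp only: mb_colless_double flip: distrib_left)
  moreover have "2 * q - 2 * p = 2 * (q - p)" by simp
  ultimately show ?thesis using assms(2) by (simp add: mb_colless_double)
qed

lemma mb_colless_add_le_odd_odd:
  assumes "p < q"
    and "mb_colless (p + (q + 1)) \<le> mb_colless p + mb_colless (q + 1) + (q + 1 - p)"
    and "mb_colless ((p + 1) + q) \<le> mb_colless (p + 1) + mb_colless q + (q - (p + 1))"
  shows "mb_colless ((2 * p + 1) + (2 * q + 1))
           \<le> mb_colless (2 * p + 1) + mb_colless (2 * q + 1) + ((2 * q + 1) - (2 * p + 1))"
proof -
  have "(2 * p + 1) + (2 * q + 1) = 2 * (p + q + 1)" by simp
  then have "mb_colless ((2 * p + 1) + (2 * q + 1)) = 2 * mb_colless (p + q + 1)"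
    by (simp only: mb_colless_double)
  moreover have "mb_colless p + mb_colless (p + 1) \<le> mb_colless (2 * p + 1)"
    by (rule mb_colless_odd_ge)
  moreover have "mb_colless (2 * q + 1) = mb_colless q + mb_colless (q + 1) + 1"
    using assms(1) mb_colless_odd[of q] by simp
  ultimately show ?thesis using assms by (simp add: add.assoc)
qed

lemma mb_colless_add_le_even_odd:
  assumes "1 \<le> p" "p \<le> q"
    and "mb_colless (p + q) \<le> mb_colless p + mb_colless q + (q - p)"
    and "mb_colless (p + (q + 1)) \<le> mb_colless p + mb_colless (q + 1) + (q + 1 - p)"
  shows "mb_colless (2 * p + (2 * q + 1))
           \<le> mb_colless (2 * p) + mb_colless (2 * q + 1) + ((2 * q + 1) - 2 * p)"
proof -
  have "mb_colless (2 * p + (2 * q + 1)) = mb_colless (p + q) + mb_colless (p + q + 1) + 1"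
    using assms(1) mb_colless_odd[of "p + q"] by (simp add: algebra_simps)
  moreover have "mb_colless (2 * q + 1) = mb_colless q + mb_colless (q + 1) + 1"
    using assms(1,2) mb_colless_odd[of q] by simp
  ultimately show ?thesis using assms by (simp add: mb_colless_double)
qed

lemma mb_colless_add_le_odd_even:
  assumes "p < q"
    and "mb_colless (p + q) \<le> mb_colless p + mb_colless q + (q - p)"
    and "mb_colless ((p + 1) + q) \<le> mb_colless (p + 1) + mb_colless q + (q - (p + 1))"
    and "mb_colless (1 + q) \<le> mb_colless 1 + mb_colless q + (q - 1)"
  shows "mb_colless ((2 * p + 1) + 2 * q)
           \<le> mb_colless (2 * p + 1) + mb_colless (2 * q) + (2 * q - (2 * p + 1))"
proof -
  have split: "mb_colless ((2 * p + 1) + 2 * q) = mb_colless (p + q) + mb_colless (p + q + 1) + 1"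
    using assms(1) mb_colless_odd[of "p + q"] by (simp add: algebra_simps)
  show ?thesis
  proof (cases "p = 0")
    case True
    \<comment> \<open>Here the odd summand is \<open>1\<close>: the instance at \<open>(0, q)\<close> is too weak, the one at \<open>(1, q)\<close> suffices.\<close>
    with split assms(1,4) show ?thesis by (simp add: mb_colless_double)
  next
    case False
    then have "mb_colless (2 * p + 1) = mb_colless p + mb_colless (p + 1) + 1"
      using mb_colless_odd[of p] by simp
    with split assms(1-3) show ?thesis by (simp add: mb_colless_double)
  qed
qed

lemma mb_colless_add_le:
  "a \<le> b \<Longrightarrow> mb_colless (a + b) \<le> mb_colless a + mb_colless b + (b - a)"
proof (induction b arbitrary: a rule: less_induct)
  case (less b)
  have IH: "\<And>x y. y < b \<Longrightarrow> x \<le> y \<Longrightarrow> mb_colless (x + y) \<le> mb_colless x + mb_colless y + (y - x)"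
    using less.IH by blast
  consider "a = 0" | "a = b" | "0 < a" "a < b"
    using less.prems by linarith
  then show ?case
  proof cases
    case 2
    then show ?thesis by (simp add: mb_colless_double flip: mult_2)
  next
    case 3
    consider p q where "a = 2 * p" "b = 2 * q" | p q where "a = 2 * p + 1" "b = 2 * q + 1"
      | p q where "a = 2 * p" "b = 2 * q + 1" | p q where "a = 2 * p + 1" "b = 2 * q"
      by (metis evenE oddE)
    then show ?thesis
    proof cases
      case (1 p q)
      with 3 have "p \<le> q" "q < b" by linarith+
      then have "mb_colless (2 * p + 2 * q) \<le> mb_colless (2 * p) + mb_colless (2 * q) + (2 * q - 2 * p)"
        by (intro mb_colless_add_le_even_even IH)
      then show ?thesis unfolding 1 .
    next
      case (2 p q)
      with 3 have "p < q" "q + 1 < b" "q < b" by linarith+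
      then have "mb_colless ((2 * p + 1) + (2 * q + 1))
          \<le> mb_colless (2 * p + 1) + mb_colless (2 * q + 1) + ((2 * q + 1) - (2 * p + 1))"
        by (intro mb_colless_add_le_odd_odd IH) linarith+
      then show ?thesis unfolding 2 .
    next
      case (3 p q)
      with \<open>0 < a\<close> \<open>a < b\<close> have "1 \<le> p" "p \<le> q" "q + 1 < b" "q < b" by linarith+
      then have "mb_colless (2 * p + (2 * q + 1))
          \<le> mb_colless (2 * p) + mb_colless (2 * q + 1) + ((2 * q + 1) - 2 * p)"
        by (intro mb_colless_add_le_even_odd IH) linarith+
      then show ?thesis unfolding 3 .
    next
      case (4 p q)
      with \<open>a < b\<close> have "p < q" "q < b" by linarith+
      then have "mb_colless ((2 * p + 1) + 2 * q)
          \<le> mb_colless (2 * p + 1) + mb_colless (2 * q) + (2 * q - (2 * p + 1))"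
        by (intro mb_colless_add_le_odd_even IH) linarith+
      then show ?thesis unfolding 4 .
    qed
  qed simp
qed

lemma mb_colless_le_colless: "mb_colless (leaves T) \<le> colless T"
proof (induction T)
  case (Node l r)
  have "mb_colless (leaves l + leaves r) \<le> mb_colless (leaves l) + mb_colless (leaves r) + bal l r"
  proof (cases "leaves l \<le> leaves r")
    case True
    then have "bal l r = leaves r - leaves l" by (simp add: bal_def)
    with mb_colless_add_le[OF True] show ?thesis by simp
  next
    case False
    then have "bal l r = leaves l - leaves r" by (simp add: bal_def)
    with mb_colless_add_le[of "leaves r" "leaves l"] False show ?thesis by (simp add: add.commute)
  qed
  with Node show ?case by simp
qed simp

lemma colless_max_balanced: "max_balanced T \<Longrightarrow> colless T = mb_colless (leaves T)"
proof (induction T)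
  case (Node l r)
  let ?a = "leaves l" and ?b = "leaves r"
  have "mb_colless (?a + ?b) = bal l r + mb_colless ?a + mb_colless ?b"
  proof -
    have "bal l r \<le> 1" using Node.prems by simp
    then have "?b = ?a \<or> ?b = ?a + 1 \<or> ?a = ?b + 1"
      unfolding bal_def by (cases "?a \<le> ?b") (simp_all, linarith+)
    then consider "?b = ?a" | "?b = ?a + 1" | "?a = ?b + 1" by blast
    then show ?thesis
    proof cases
      case 1
      then show ?thesis using mb_colless_double[of ?a] by (simp add: bal_def mult_2)
    next
      case 2
      then show ?thesis using mb_colless_odd[OF leaves_ge_1, of l] by (simp add: bal_def mult_2)
    next
      case 3
      then show ?thesis using mb_colless_odd[OF leaves_ge_1, of r] by (simp add: bal_def mult_2)
    qed
  qed
  with Node show ?case by simp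
qed simp

lemma colless_le_leaves_square: "colless T \<le> leaves T * leaves T"
proof (induction T)
  case (Node l r)
  let ?a = "leaves l" and ?b = "leaves r"
  have "?a \<le> ?a * ?b" "?b \<le> ?a * ?b"
    using mult_le_mono2[OF leaves_ge_1[of r], of ?a] mult_le_mono1[OF leaves_ge_1[of l], of ?b] by simp_all
  moreover have "bal l r \<le> ?a + ?b" by (auto simp: bal_def)
  ultimately have "colless (Node l r) \<le> ?a * ?a + ?b * ?b + 2 * (?a * ?b)"
    using Node.IH by (simp only: colless.simps)
  also have "\<dots> = (?a + ?b) * (?a + ?b)" by (simp add: algebra_simps)
  finally show ?case by simp
qed simp

lemma min_colless_eq_mb_colless:
  assumes "n \<ge> 1"
  shows "min_colless n = mb_colless n"
  unfolding min_colless_def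
proof (rule Min_eqI)
  have "colless ` {T. leaves T = n} \<subseteq> {..n * n}"
    using colless_le_leaves_square by blast
  then show "finite (colless ` {T. leaves T = n})"
    by (rule finite_subset) simp
next
  fix y
  assume "y \<in> colless ` {T. leaves T = n}"
  then obtain S where "leaves S = n" "y = colless S" by blast
  then show "mb_colless n \<le> y" using mb_colless_le_colless[of S] by simp
next
  have "colless (mb_tree n) = mb_colless n"
    using colless_max_balanced[OF max_balanced_mb_tree] leaves_mb_tree[OF assms] by simp
  then show "mb_colless n \<in> colless ` {T. leaves T = n}"
    by (rule image_eqI[OF sym]) (simp add: leaves_mb_tree[OF assms])
qed

theorem theorem4:
  fixes n :: nat
  assumes "n \<ge> 1"
  shows "(\<exists>T. max_balanced T \<and> leaves T = n) \<and>
         (\<forall>T. max_balanced T \<and> leaves T = n \<longrightarrow> colless T = min_colless n)"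
proof (intro conjI allI impI)
  show "\<exists>T. max_balanced T \<and> leaves T = n"
    using leaves_mb_tree[OF assms] max_balanced_mb_tree by blast
  fix T
  assume "max_balanced T \<and> leaves T = n"
  then show "colless T = min_colless n"
    using colless_max_balanced min_colless_eq_mb_colless[OF assms] by simp
qed

end
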